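(* Let $p>2$, let $\mathcal G$ be a regular single-knot metric graph of length $\ell$ with $H$ half-lines, $P$ pendants, $L$ loops ($P+L\ge1$), and let $u$ be a positive core-symmetric bound-state. Then there exists $y>0$ such that: 1. for each half-line $h$, either $u_h(x)=\varphi(x+y)$ for all $x\ge0$ or $u_h(x)=\varphi(x-y)$ for all $x\ge0$; 2. letting $H^+$ ($H^-$) be the number of half-lines with the first (second) alternative, $\theta=\frac{H^+-H^-}{P+2L}$, and $z=\varphi(y)\in\big(0,(p/2)^{1/(p-2)}\big)$, every compact edge $\kappa$ satisfies \[ -u_\kappa''+u_\kappa=u_\kappa^{p-1}\text{ in }[0,\ell],\quad u_\kappa(0)=z,\quad u_\kappa'(0)=\theta\sqrt{2f(z)},\quad u_\kappa'(\ell)=0, \] and in particular $-\frac12(u_\kappa')^2+f(u_\kappa)\equiv(1-\theta^2)f(z)$ on $[0,\ell]$.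
   Context: A single-knot metric graph consists of $H\ge1$ half-lines, $P\ge0$ pendants and $L\ge0$ loops attached at a common vertex $\mathbf 0$; regular of length $\ell$: pendants of length $\ell$, loops of length $2\ell$. Convention: a dummy vertex at the midpoint of each loop, so all compact edges have length $\ell$, identified with $[0,\ell]$ with $\mathbf 0$ at $x=0$; half-lines identified with $[0,\infty)$, $\mathbf 0$ at $x=0$. A bound-state is a nontrivial $u\in H^1(\mathcal G)$ solving $-u''+u=|u|^{p-2}u$ on each edge with Neumann–Kirchhoff conditions (sum of inward derivatives at each vertex vanishes). Core-symmetric: restrictions to all compact edges coincide. $f(x)=\frac12x^2-\frac1p|x|^p$, and $\varphi(x)=(p/2)^{1/(p-2)}\operatorname{sech}^{2/(p-2)}\big(\frac{p-2}{2}x\big)$. *)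

theory Defs
  imports "HOL-Analysis.Analysis"
begin

definition fpot :: "real \<Rightarrow> real \<Rightarrow> real" where
  "fpot p x = x\<^sup>2 / 2 - \<bar>x\<bar> powr p / p"

definition phi :: "real \<Rightarrow> real \<Rightarrow> real" where
  "phi p x = (p / 2) powr (1 / (p - 2)) * (1 / cosh ((p - 2) / 2 * x)) powr (2 / (p - 2))"

text \<open>Compact edges (all identified with [0,l], knot at 0) are indexed by j < P + 2L:
  j < P are pendants; P+2k and P+2k+1 are the two halves of loop k (dummy vertex at x = l).\<close>
definition bound_state ::
  "real \<Rightarrow> real \<Rightarrow> nat \<Rightarrow> nat \<Rightarrow> nat \<Rightarrow>
   (nat \<Rightarrow> real \<Rightarrow> real) \<Rightarrow> (nat \<Rightarrow> real \<Rightarrow> real) \<Rightarrow>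
   (nat \<Rightarrow> real \<Rightarrow> real) \<Rightarrow> (nat \<Rightarrow> real \<Rightarrow> real) \<Rightarrow> bool" where
  "bound_state p l H P L uh duh uc duc \<longleftrightarrow>
     \<comment> \<open>equation and regularity on half-lines\<close>
     (\<forall>i<H. \<forall>x\<ge>0.
        (uh i has_real_derivative duh i x) (at x within {0..}) \<and>
        (duh i has_real_derivative (uh i x - \<bar>uh i x\<bar> powr (p - 2) * uh i x)) (at x within {0..})) \<and>
     \<comment> \<open>H^1 on half-lines\<close>
     (\<forall>i<H. (\<lambda>x. (uh i x)\<^sup>2) integrable_on {0..} \<and> (\<lambda>x. (duh i x)\<^sup>2) integrable_on {0..}) \<and>
     \<comment> \<open>equation on compact edges\<close>
     (\<forall>j<P + 2 * L. \<forall>x\<in>{0..l}.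
        (uc j has_real_derivative duc j x) (at x within {0..l}) \<and>
        (duc j has_real_derivative (uc j x - \<bar>uc j x\<bar> powr (p - 2) * uc j x)) (at x within {0..l})) \<and>
     \<comment> \<open>continuity at the knot\<close>
     (\<forall>i<H. \<forall>j<P + 2 * L. uh i 0 = uc j 0) \<and>
     (\<forall>i<H. \<forall>i'<H. uh i 0 = uh i' 0) \<and>
     (\<forall>j<P + 2 * L. \<forall>j'<P + 2 * L. uc j 0 = uc j' 0) \<and>
     \<comment> \<open>Kirchhoff at the knot (inward derivatives are d/dx at x = 0)\<close>
     (\<Sum>i<H. duh i 0) + (\<Sum>j<P + 2 * L. duc j 0) = 0 \<and>
     \<comment> \<open>Kirchhoff (Neumann) at pendant endpoints\<close>
     (\<forall>j<P. duc j l = 0) \<and>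
     \<comment> \<open>continuity and Kirchhoff at loop midpoints (inward derivative is -d/dx at x = l)\<close>
     (\<forall>k<L. uc (P + 2 * k) l = uc (P + 2 * k + 1) l \<and>
             - duc (P + 2 * k) l - duc (P + 2 * k + 1) l = 0) \<and>
     \<comment> \<open>nontrivial\<close>
     ((\<exists>i<H. \<exists>x\<ge>0. uh i x \<noteq> 0) \<or> (\<exists>j<P + 2 * L. \<exists>x\<in>{0..l}. uc j x \<noteq> 0))"

definition positive_state ::
  "real \<Rightarrow> nat \<Rightarrow> nat \<Rightarrow> nat \<Rightarrow> (nat \<Rightarrow> real \<Rightarrow> real) \<Rightarrow> (nat \<Rightarrow> real \<Rightarrow> real) \<Rightarrow> bool" where
  "positive_state l H P L uh uc \<longleftrightarrow>
     (\<forall>i<H. \<forall>x\<ge>0. uh i x > 0) \<and> (\<forall>j<P + 2 * L. \<forall>x\<in>{0..l}. uc j x > 0)"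

definition core_symmetric ::
  "real \<Rightarrow> nat \<Rightarrow> nat \<Rightarrow> (nat \<Rightarrow> real \<Rightarrow> real) \<Rightarrow> bool" where
  "core_symmetric l P L uc \<longleftrightarrow>
     (\<forall>j<P + 2 * L. \<forall>j'<P + 2 * L. \<forall>x\<in>{0..l}. uc j x = uc j' x)"

end

theory Submission
  imports Defs
begin

text \<open>
  On each half-line a positive H^1 solution has zero energy, so its slope at the knot is
  determined up to sign by its value z there; by ODE uniqueness it is then a translate
  phi(x + y) or phi(x - y) of the soliton, where phi y = z. Core symmetry makes all compact
  edges carry the same solution, so Kirchhoff's condition at the knot fixes their common slope
  as theta times the half-line slope, and the Neumann condition at the far end holds on every
  edge. If y were 0, all slopes at the knot would vanish and each edge would coincide with phi
  itself, whose derivative does not vanish at l.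
\<close>

section \<open>The soliton\<close>

lemma phi_eq_exp:
  assumes "p > 2"
  shows "phi p x = exp (ln (p/2) / (p-2) - 2/(p-2) * ln (cosh ((p-2)/2*x)))"
proof -
  have c: "cosh ((p-2)/2*x) > 0" by simp
  have "phi p x = exp (1/(p-2) * ln (p/2)) * exp (2/(p-2) * ln (1 / cosh ((p-2)/2*x)))"
    unfolding phi_def powr_def using assms c by auto
  also have "\<dots> = exp (ln (p/2) / (p-2) - 2/(p-2) * ln (cosh ((p-2)/2*x)))"
    using c by (simp add: ln_div exp_diff exp_minus field_simps)
  finally show ?thesis .
qed

lemma phi_pos: "p > 2 \<Longrightarrow> phi p x > 0"
  by (simp add: phi_eq_exp)

lemma phi_zero: "phi p 0 = (p/2) powr (1/(p-2))"
  by (simp add: phi_def)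

lemma phi_minus: "phi p (-x) = phi p x"
  by (simp add: phi_def)

lemma phi_less_phi_zero:
  assumes "p > 2" and "x \<noteq> 0"
  shows "phi p x < phi p 0"
proof -
  have "cosh ((p-2)/2*x) > 1"
    using assms cosh_real_ge_1[of "(p-2)/2*x"] by (auto simp: order_le_less)
  then have "2/(p-2) * ln (cosh ((p-2)/2*x)) > 0" using assms by simp
  then show ?thesis unfolding phi_eq_exp[OF assms(1)] by simp
qed

lemma tanh_squared: "(tanh t)\<^sup>2 = 1 - 1 / (cosh t)\<^sup>2" for t :: real
proof -
  have "(cosh t)\<^sup>2 > 0" by simp
  then show ?thesis
    by (simp add: tanh_def power_divide cosh_square_eq field_simps)
qed

lemma phi_powr_p_minus_2:
  assumes "p > 2"
  shows "phi p x powr (p-2) = (p/2) * (1 - (tanh ((p-2)/2*x))\<^sup>2)"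
proof -
  have c: "cosh ((p-2)/2*x) > 0" by simp
  have "phi p x powr (p-2) = exp ((p-2) * (ln (p/2) / (p-2) - 2/(p-2) * ln (cosh ((p-2)/2*x))))"
    using phi_pos[OF assms, of x] by (simp add: powr_def phi_eq_exp[OF assms])
  also have "\<dots> = exp (ln (p/2) - ln ((cosh ((p-2)/2*x))\<^sup>2))"
    using assms c by (simp add: right_diff_distrib ln_realpow)
  also have "\<dots> = (p/2) / (cosh ((p-2)/2*x))\<^sup>2"
    using assms c by (simp add: exp_diff)
  also have "\<dots> = (p/2) * (1 - (tanh ((p-2)/2*x))\<^sup>2)"
    by (simp add: tanh_squared)
  finally show ?thesis .
qed

definition dphi :: "real \<Rightarrow> real \<Rightarrow> real" where
  "dphi p x = - phi p x * tanh ((p-2)/2*x)"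

lemma dphi_zero [simp]: "dphi p 0 = 0"
  by (simp add: dphi_def)

lemma dphi_minus: "dphi p (-x) = - dphi p x"
  by (simp add: dphi_def phi_minus)

lemma dphi_neg: "p > 2 \<Longrightarrow> x > 0 \<Longrightarrow> dphi p x < 0"
  using phi_pos[of p x] by (simp add: dphi_def)

lemma has_real_derivative_phi:
  assumes "p > 2"
  shows "(phi p has_real_derivative dphi p x) (at x within S)"
proof -
  define E where "E x = exp (ln (p/2) / (p-2) - 2/(p-2) * ln (cosh ((p-2)/2*x)))" for x
  have c: "cosh ((p-2)/2*x) > 0" by simp
  have "(E has_real_derivative
      E x * (0 - 2/(p-2) * ((1 / cosh ((p-2)/2*x)) * (sinh ((p-2)/2*x) * ((p-2)/2 * 1)))))
      (at x within S)"
    unfolding E_def using c by (intro derivative_eq_intros refl) auto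
  moreover have "E x * (0 - 2/(p-2) * ((1 / cosh ((p-2)/2*x)) * (sinh ((p-2)/2*x) * ((p-2)/2 * 1))))
      = dphi p x"
    using assms c by (simp add: E_def dphi_def phi_eq_exp tanh_def field_simps)
  moreover have "E = phi p"
    using phi_eq_exp[OF assms] by (auto simp: E_def)
  ultimately show ?thesis by simp
qed

lemma has_real_derivative_dphi:
  assumes "p > 2"
  shows "(dphi p has_real_derivative (phi p x - phi p x powr (p-1))) (at x within S)"
proof -
  define t where "t = tanh ((p-2)/2*x)"
  have "((\<lambda>x. tanh ((p-2)/2*x)) has_real_derivative (1 - t\<^sup>2) * ((p-2)/2)) (at x within S)"
    unfolding t_def by (auto intro!: derivative_eq_intros)
  from DERIV_minus[OF DERIV_mult[OF has_real_derivative_phi[OF assms] this]]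
  have deriv: "(dphi p has_real_derivative phi p x * t\<^sup>2 - phi p x * (1 - t\<^sup>2) * ((p-2)/2))
      (at x within S)"
    by (simp add: dphi_def[abs_def] t_def power2_eq_square algebra_simps)
  have "phi p x powr (p-1) = phi p x * phi p x powr (p-2)"
    using phi_pos[OF assms, of x] powr_add[of "phi p x" 1 "p-2"] by simp
  also have "phi p x powr (p-2) = (p/2) * (1 - t\<^sup>2)"
    unfolding t_def by (rule phi_powr_p_minus_2[OF assms])
  finally have "phi p x - phi p x powr (p-1) = phi p x * t\<^sup>2 - phi p x * (1 - t\<^sup>2) * ((p-2)/2)"
    by (simp add: field_simps)
  with deriv show ?thesis by simp
qed

lemma fpot_phi:
  assumes "p > 2"
  shows "fpot p (phi p x) = (dphi p x)\<^sup>2 / 2"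
proof -
  define t where "t = tanh ((p-2)/2*x)"
  have pos: "phi p x > 0" using phi_pos[OF assms] .
  have "phi p x powr p = (phi p x)\<^sup>2 * phi p x powr (p-2)"
    using pos powr_add[of "phi p x" 2 "p-2"] by simp
  also have "phi p x powr (p-2) = (p/2) * (1 - t\<^sup>2)"
    unfolding t_def by (rule phi_powr_p_minus_2[OF assms])
  finally have "fpot p (phi p x) = (phi p x)\<^sup>2 / 2 - (phi p x)\<^sup>2 * ((p/2) * (1 - t\<^sup>2)) / p"
    unfolding fpot_def using pos by simp
  also have "\<dots> = (phi p x * t)\<^sup>2 / 2"
    using assms by (simp add: field_simps power_mult_distrib)
  finally show ?thesis by (simp add: dphi_def t_def power2_eq_square)
qed

lemma has_real_derivative_phi_shift:
  assumes "p > 2"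
  shows "((\<lambda>x. phi p (x + y)) has_real_derivative dphi p (x + y)) (at x within S)"
    and "((\<lambda>x. dphi p (x + y)) has_real_derivative phi p (x + y) - phi p (x + y) powr (p-1))
           (at x within S)"
  using DERIV_chain2[OF has_real_derivative_phi[OF assms] DERIV_add[OF DERIV_ident DERIV_const]]
    DERIV_chain2[OF has_real_derivative_dphi[OF assms] DERIV_add[OF DERIV_ident DERIV_const]]
  by (simp_all add: o_def)

lemma le_phi_zero_if_fpot_nonneg:
  assumes "p > 2" and "z > 0" and "fpot p z \<ge> 0"
  shows "z \<le> phi p 0"
proof -
  have "z powr p = z\<^sup>2 * z powr (p-2)"
    using assms powr_add[of z 2 "p-2"] by simp
  then have "z\<^sup>2 * (p/2 - z powr (p-2)) \<ge> 0"
    using assms unfolding fpot_def by (simp add: field_simps)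
  then have "z powr (p-2) \<le> p/2" using assms by (simp add: zero_le_mult_iff)
  then have "(z powr (p-2)) powr (1/(p-2)) \<le> (p/2) powr (1/(p-2))"
    using assms by (intro powr_mono2) auto
  then show ?thesis using assms by (simp add: powr_powr phi_zero)
qed

lemma phi_surj:
  assumes "p > 2" and "z > 0" and "z \<le> phi p 0"
  shows "\<exists>y\<ge>0. phi p y = z"
proof -
  define a where "a = ln (p/2) / (p-2)"
  have "z \<le> exp a" using assms phi_eq_exp[OF assms(1), of 0] by (simp add: a_def)
  then have "ln z \<le> a" using assms(2) ln_le_cancel_iff[of z "exp a"] by simp
  define c where "c = exp ((p-2)/2 * (a - ln z))"
  have c: "c \<ge> 1" unfolding c_def using assms \<open>ln z \<le> a\<close> by simp
  define y where "y = arcosh c / ((p-2)/2)"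
  have "y \<ge> 0" unfolding y_def using c assms by simp
  have "cosh ((p-2)/2*y) = c" unfolding y_def using assms c by simp
  then have "phi p y = exp (a - 2/(p-2) * ((p-2)/2 * (a - ln z)))"
    unfolding phi_eq_exp[OF assms(1)] a_def c_def by simp
  also have "a - 2/(p-2) * ((p-2)/2 * (a - ln z)) = ln z"
    using assms(1) by (simp add: field_simps)
  finally have "phi p y = z" using assms(2) by simp
  with \<open>y \<ge> 0\<close> show ?thesis by blast
qed

section \<open>Positive solutions of the stationary equation\<close>

lemma has_real_derivative_unique_Icc:
  fixes f g :: "real \<Rightarrow> real"
  assumes "a < b" and x: "x \<in> {a..b}" and "\<And>t. t \<in> {a..b} \<Longrightarrow> f t = g t"
    and "(f has_real_derivative f') (at x within {a..b})"
    and "(g has_real_derivative g') (at x within {a..b})"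
  shows "f' = g'"
proof -
  have "(f has_real_derivative g') (at x within {a..b})"
    using has_derivative_transform[OF x, of f g] assms(3,5) unfolding has_field_derivative_def by auto
  moreover have "at x within {a..b} \<noteq> bot" using assms(1) x by (simp add: trivial_limit_within)
  ultimately show ?thesis using has_field_derivative_unique assms(4) by blast
qed

lemma abs_powr_times_self: "u > 0 \<Longrightarrow> \<bar>u\<bar> powr (p - 2) * u = u powr (p - 1)" for u :: real
  using powr_add[of u "p - 2" 1] by simp

lemma energy_constant:
  fixes u du :: "real \<Rightarrow> real"
  assumes "p > 2" and "convex S" and "x0 \<in> S" and "x \<in> S"
    and u: "\<And>x. x \<in> S \<Longrightarrow> (u has_real_derivative du x) (at x within S)"
    and du: "\<And>x. x \<in> S \<Longrightarrow> (du has_real_derivative (u x - u x powr (p-1))) (at x within S)"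
    and pos: "\<And>x. x \<in> S \<Longrightarrow> u x > 0"
  shows "- (1/2) * (du x)\<^sup>2 + fpot p (u x) = - (1/2) * (du x0)\<^sup>2 + fpot p (u x0)"
proof -
  define E where "E x = - (1/2) * (du x)\<^sup>2 + ((u x)\<^sup>2/2 - u x powr p / p)" for x
  have "(E has_real_derivative 0) (at t within S)" if t: "t \<in> S" for t
  proof -
    have "(E has_real_derivative
        - (1/2) * (2 * du t * (u t - u t powr (p-1))) + (2 * u t * du t / 2 - p * u t powr (p-1) * du t / p))
        (at t within S)"
      unfolding E_def using assms(1) pos[OF t] u[OF t] du[OF t]
      by (intro derivative_eq_intros has_real_derivative_powr refl) auto
    then show ?thesis using assms(1) by (simp add: algebra_simps)
  qed
  then obtain c where "\<forall>x\<in>S. E x = c" using has_field_derivative_zero_constant[OF assms(2)] by blast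
  then show ?thesis using assms(3,4) pos[OF assms(3)] pos[OF assms(4)] by (simp add: E_def fpot_def)
qed

lemma powr_lipschitz:
  fixes a b r m M :: real
  assumes "r \<ge> 1" "0 < m" "m \<le> a" "a \<le> M" "m \<le> b" "b \<le> M"
  shows "\<bar>a powr r - b powr r\<bar> \<le> r * M powr (r-1) * \<bar>a - b\<bar>"
proof -
  have main: "\<bar>y powr r - x powr r\<bar> \<le> r * M powr (r-1) * \<bar>y - x\<bar>"
    if xy: "m \<le> x" "x < y" "y \<le> M" for x y
  proof -
    have "\<exists>w. x < w \<and> w < y \<and> y powr r - x powr r = (y - x) * (r * w powr (r - 1))"
      using xy assms by (intro MVT2) (auto intro!: has_real_derivative_powr)
    then obtain w where w: "x < w" "w < y" "y powr r - x powr r = (y - x) * (r * w powr (r - 1))"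
      by blast
    have "w powr (r-1) \<le> M powr (r-1)" using w xy assms by (intro powr_mono2) auto
    have "\<bar>y powr r - x powr r\<bar> = (y - x) * (r * w powr (r - 1))"
      using w xy assms by simp
    also have "\<dots> \<le> (y - x) * (r * M powr (r - 1))"
      using \<open>w powr (r-1) \<le> M powr (r-1)\<close> xy assms by (intro mult_left_mono) auto
    finally show ?thesis using xy by (simp add: algebra_simps)
  qed
  show ?thesis
    using main[of a b] main[of b a] assms by (cases a b rule: linorder_cases) (auto simp: abs_minus_commute)
qed

lemma two_products_le_sum_squares:
  fixes a b c K :: real
  assumes "c\<^sup>2 \<le> K\<^sup>2 * a\<^sup>2"
  shows "2 * a * b + 2 * b * c \<le> (2 + K\<^sup>2) * (a\<^sup>2 + b\<^sup>2)"
proof -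
  have "(2 + K\<^sup>2) * (a\<^sup>2 + b\<^sup>2) = 2 * a\<^sup>2 + 2 * b\<^sup>2 + K\<^sup>2 * a\<^sup>2 + K\<^sup>2 * b\<^sup>2"
    by (simp add: algebra_simps)
  moreover have "0 \<le> a\<^sup>2" "0 \<le> K\<^sup>2 * b\<^sup>2" by simp_all
  ultimately show ?thesis
    using assms sum_squares_bound[of a b] sum_squares_bound[of b c] by linarith
qed

lemma gronwall_vanishing:
  fixes W W' :: "real \<Rightarrow> real"
  assumes "x \<in> {0..T}" and "W 0 = 0"
    and W: "\<And>t. t \<in> {0..T} \<Longrightarrow> (W has_real_derivative W' t) (at t within {0..T})"
    and le: "\<And>t. t \<in> {0..T} \<Longrightarrow> W' t \<le> C * W t"
  shows "W x \<le> 0"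
proof -
  define V where "V t = exp (-C*t) * W t" for t
  have V: "(V has_real_derivative exp (-C*t) * (W' t - C * W t)) (at t within {0..T})"
    if "t \<in> {0..T}" for t
    unfolding V_def using W[OF that] by (auto intro!: derivative_eq_intros simp: algebra_simps)
  have "V x \<le> V 0"
  proof (rule DERIV_nonpos_imp_decreasing_open[of 0 x V])
    show "0 \<le> x" using assms by simp
    have "continuous_on {0..T} V" by (rule DERIV_continuous_on, rule V)
    then show "continuous_on {0..x} V" by (rule continuous_on_subset) (use assms(1) in auto)
    fix t assume t: "0 < t" "t < x"
    then have "at t within {0..T} = at t" using assms(1) by (intro at_within_Icc_at) auto
    then show "\<exists>y. (V has_real_derivative y) (at t) \<and> y \<le> 0"
      using V[of t] le[of t] t assms(1) by (auto intro!: mult_nonneg_nonpos)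
  qed
  then show ?thesis using assms(2) by (simp add: V_def mult_le_0_iff)
qed

lemma positive_bounds_on_Icc:
  fixes u v :: "real \<Rightarrow> real"
  assumes "continuous_on {0..T} u" "continuous_on {0..T} v"
    and "\<And>x. x \<in> {0..T} \<Longrightarrow> u x > 0" "\<And>x. x \<in> {0..T} \<Longrightarrow> v x > 0" and "T \<ge> 0"
  obtains m M where "m > 0" "\<And>x. x \<in> {0..T} \<Longrightarrow> m \<le> u x \<and> u x \<le> M \<and> m \<le> v x \<and> v x \<le> M"
proof -
  have ne: "{0..T} \<noteq> {}" using assms(5) by simp
  obtain x1 where x1: "x1 \<in> {0..T}" "\<And>x. x \<in> {0..T} \<Longrightarrow> min (u x1) (v x1) \<le> min (u x) (v x)"
    using continuous_attains_inf[OF compact_Icc ne continuous_on_min[OF assms(1,2)]] by blast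
  obtain x2 where "\<And>x. x \<in> {0..T} \<Longrightarrow> max (u x) (v x) \<le> max (u x2) (v x2)"
    using continuous_attains_sup[OF compact_Icc ne continuous_on_max[OF assms(1,2)]] by blast
  moreover have "min (u x1) (v x1) > 0" using assms(3,4) x1(1) by simp
  ultimately show ?thesis using x1 that[of "min (u x1) (v x1)" "max (u x2) (v x2)"] by force
qed

text \<open>On a compact interval both solutions stay in some [m, M] with m > 0, where the
  nonlinearity is Lipschitz; Gronwall's argument then applies to (u - v)^2 + (u' - v')^2.\<close>
lemma positive_solution_unique:
  fixes u du v dv :: "real \<Rightarrow> real"
  assumes p: "p > 2" and "T \<ge> 0" and x: "x \<in> {0..T}"
    and u: "\<And>x. x \<in> {0..T} \<Longrightarrow> (u has_real_derivative du x) (at x within {0..T})"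
    and du: "\<And>x. x \<in> {0..T} \<Longrightarrow> (du has_real_derivative (u x - u x powr (p-1))) (at x within {0..T})"
    and v: "\<And>x. x \<in> {0..T} \<Longrightarrow> (v has_real_derivative dv x) (at x within {0..T})"
    and dv: "\<And>x. x \<in> {0..T} \<Longrightarrow> (dv has_real_derivative (v x - v x powr (p-1))) (at x within {0..T})"
    and pos: "\<And>x. x \<in> {0..T} \<Longrightarrow> u x > 0" "\<And>x. x \<in> {0..T} \<Longrightarrow> v x > 0"
    and "u 0 = v 0" and "du 0 = dv 0"
  shows "u x = v x \<and> du x = dv x"
proof -
  obtain m M where m: "m > 0" and mM: "\<And>x. x \<in> {0..T} \<Longrightarrow> m \<le> u x \<and> u x \<le> M \<and> m \<le> v x \<and> v x \<le> M"
    using positive_bounds_on_Icc[OF DERIV_continuous_on[OF u] DERIV_continuous_on[OF v] pos \<open>T \<ge> 0\<close>] by blast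
  define K where "K = 1 + (p-1) * M powr (p-2)"
  define g where "g w = w - w powr (p-1)" for w
  have lipschitz: "\<bar>g (u t) - g (v t)\<bar> \<le> K * \<bar>u t - v t\<bar>" if t: "t \<in> {0..T}" for t
  proof -
    have "\<bar>u t powr (p-1) - v t powr (p-1)\<bar> \<le> (p-1) * M powr (p-1-1) * \<bar>u t - v t\<bar>"
      using mM[OF t] m p by (intro powr_lipschitz) auto
    then show ?thesis unfolding K_def g_def by (simp add: algebra_simps abs_triangle_ineq4)
  qed
  define W where "W t = (u t - v t)\<^sup>2 + (du t - dv t)\<^sup>2" for t
  define W' where "W' t = 2 * (u t - v t) * (du t - dv t) + 2 * (du t - dv t) * (g (u t) - g (v t))" for t
  have "W x \<le> 0"
  proof (rule gronwall_vanishing[OF x, of W W' "2 + K\<^sup>2"])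
    show "W 0 = 0" using assms by (simp add: W_def)
    fix t assume t: "t \<in> {0..T}"
    show "(W has_real_derivative W' t) (at t within {0..T})"
      unfolding W_def W'_def g_def
      by (rule DERIV_cong, (rule u[OF t] du[OF t] v[OF t] dv[OF t] derivative_eq_intros refl)+)
        (simp add: algebra_simps)
    have "(g (u t) - g (v t))\<^sup>2 \<le> K\<^sup>2 * (u t - v t)\<^sup>2"
      using lipschitz[OF t] by (metis abs_ge_zero abs_mult order.trans power2_abs power_mono power_mult_distrib)
    then show "W' t \<le> (2 + K\<^sup>2) * W t"
      unfolding W_def W'_def by (rule two_products_le_sum_squares)
  qed
  then show ?thesis unfolding W_def by (simp add: sum_power2_le_zero_iff)
qed

lemma eq_shifted_phi_if_initial_values:
  fixes u du :: "real \<Rightarrow> real"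
  assumes p: "p > 2" and "x \<ge> 0"
    and u: "\<And>x. x \<in> {0..} \<Longrightarrow> (u has_real_derivative du x) (at x within {0..})"
    and du: "\<And>x. x \<in> {0..} \<Longrightarrow> (du has_real_derivative (u x - u x powr (p-1))) (at x within {0..})"
    and pos: "\<And>x. x \<in> {0..} \<Longrightarrow> u x > 0"
    and "u 0 = phi p c" and "du 0 = dphi p c"
  shows "u x = phi p (x + c)"
proof -
  have sub: "{0..x} \<subseteq> {0..}" by auto
  have "u x = phi p (x + c) \<and> du x = dphi p (x + c)"
    using assms has_real_derivative_phi_shift[OF p] phi_pos[OF p]
    by (intro positive_solution_unique[OF p \<open>x \<ge> 0\<close>])
      (auto intro: DERIV_subset[OF u sub] DERIV_subset[OF du sub])
  then show ?thesis by simp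
qed

section \<open>Positive H^1 solutions on a half-line\<close>

lemma integrable_nonneg_tendsto_zero:
  fixes f :: "real \<Rightarrow> real"
  assumes int: "f integrable_on {0..}" and nonneg: "\<And>x. x \<ge> 0 \<Longrightarrow> f x \<ge> 0"
    and lim: "(f \<longlongrightarrow> L) at_top"
  shows "L = 0"
proof (rule ccontr)
  assume "L \<noteq> 0"
  moreover have "L \<ge> 0"
    using nonneg by (intro tendsto_lowerbound[OF lim] eventually_mono[OF eventually_ge_at_top[of 0]]) auto
  ultimately have L: "L > 0" by simp
  obtain T where T: "\<And>x. x \<ge> T \<Longrightarrow> f x > L/2"
    using order_tendstoD(1)[OF lim, of "L/2"] L by (auto simp: eventually_at_top_linorder)
  define a where "a = max T 0"
  define r where "r = 2 * (\<bar>integral {0..} f\<bar> + 1) / L"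
  have r: "r > 0" "r * (L/2) > integral {0..} f" using L by (simp_all add: r_def)
  have sub: "{a..a+r} \<subseteq> {0..}" by (auto simp: a_def)
  have int_a: "f integrable_on {a..a+r}" by (rule integrable_on_subinterval[OF int sub])
  have "r * (L/2) = integral {a..a+r} (\<lambda>x. L/2)" using r by simp
  also have "\<dots> \<le> integral {a..a+r} f"
    using int_a T by (intro integral_le) (auto simp: a_def less_imp_le)
  also have "\<dots> \<le> integral {0..} f"
    using sub int_a int nonneg by (intro integral_subset_le) auto
  finally show False using r by simp
qed

text \<open>The derivative 2 u u' of u^2 is absolutely integrable, being dominated by u^2 + u'^2.\<close>
lemma square_convergent_at_top:
  fixes u du :: "real \<Rightarrow> real"
  assumes u: "\<And>x. x \<in> {0..} \<Longrightarrow> (u has_real_derivative du x) (at x within {0..})"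
    and du_cont: "continuous_on {0..} du"
    and int: "(\<lambda>x. (u x)\<^sup>2) integrable_on {0..}" "(\<lambda>x. (du x)\<^sup>2) integrable_on {0..}"
  obtains J where "((\<lambda>b. (u b)\<^sup>2) \<longlongrightarrow> J) at_top"
proof -
  define F where "F x = 2 * u x * du x" for x
  have S: "{0::real..} \<in> sets lebesgue" by simp
  have absF: "F absolutely_integrable_on {0..}"
  proof (rule measurable_bounded_by_integrable_imp_absolutely_integrable[OF _ S integrable_add[OF int]])
    show "F \<in> borel_measurable (lebesgue_on {0..})"
      unfolding F_def
      by (intro continuous_imp_measurable_on_sets_lebesgue S continuous_intros du_cont
          DERIV_continuous_on[OF u])
    fix x :: real
    have "0 \<le> (\<bar>u x\<bar> - \<bar>du x\<bar>)\<^sup>2" by simp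
    then show "norm (F x) \<le> (u x)\<^sup>2 + (du x)\<^sup>2"
      unfolding F_def by (simp add: power2_eq_square algebra_simps abs_mult)
  qed
  have integral_eq: "(LINT x:{0..b}|lebesgue. F x) = (u b)\<^sup>2 - (u 0)\<^sup>2" if b: "b \<ge> 0" for b
  proof -
    have "(F has_integral ((u b)\<^sup>2 - (u 0)\<^sup>2)) {0..b}"
    proof (rule fundamental_theorem_of_calculus[OF b])
      fix x assume "x \<in> {0..b}"
      then have "(u has_real_derivative du x) (at x within {0..b})"
        using u[of x] by (auto intro: DERIV_subset)
      then show "((\<lambda>x. (u x)\<^sup>2) has_vector_derivative F x) (at x within {0..b})"
        unfolding F_def has_real_derivative_iff_has_vector_derivative[symmetric]
        by (auto intro!: derivative_eq_intros)
    qed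
    moreover have "set_integrable lebesgue {0..b} F"
      by (rule set_integrable_subset[OF absF]) auto
    ultimately show ?thesis
      using set_lebesgue_integral_eq_integral(2) integral_unique by metis
  qed
  have "((\<lambda>b. LINT x:{0..b}|lebesgue. F x) \<longlongrightarrow> (LINT x:{0..}|lebesgue. F x)) at_top"
    by (rule tendsto_set_lebesgue_integral_at_top[OF _ absF]) simp
  moreover have "eventually (\<lambda>b. (LINT x:{0..b}|lebesgue. F x) = (u b)\<^sup>2 - (u 0)\<^sup>2) at_top"
    using eventually_ge_at_top[of "0::real"] by (rule eventually_mono) (rule integral_eq)
  ultimately have "((\<lambda>b. (u b)\<^sup>2 - (u 0)\<^sup>2) \<longlongrightarrow> (LINT x:{0..}|lebesgue. F x)) at_top"
    by (rule Lim_transform_eventually)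
  from tendsto_add[OF this tendsto_const[of "(u 0)\<^sup>2"]]
  have "((\<lambda>b. (u b)\<^sup>2) \<longlongrightarrow> (LINT x:{0..}|lebesgue. F x) + (u 0)\<^sup>2) at_top" by simp
  then show ?thesis using that by blast
qed

lemma H1_square_tendsto_zero:
  fixes u du :: "real \<Rightarrow> real"
  assumes "\<And>x. x \<in> {0..} \<Longrightarrow> (u has_real_derivative du x) (at x within {0..})"
    and "continuous_on {0..} du"
    and int: "(\<lambda>x. (u x)\<^sup>2) integrable_on {0..}" "(\<lambda>x. (du x)\<^sup>2) integrable_on {0..}"
  shows "((\<lambda>b. (u b)\<^sup>2) \<longlongrightarrow> 0) at_top"
proof -
  obtain J where J: "((\<lambda>b. (u b)\<^sup>2) \<longlongrightarrow> J) at_top"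
    using square_convergent_at_top[OF assms] .
  then have "J = 0" by (rule integrable_nonneg_tendsto_zero[OF int(1), rotated]) simp
  then show ?thesis using J by simp
qed

text \<open>The energy is constant and both u and u' are in L^2, so u tends to 0 and the
  energy equals the limit of -u'^2/2, which must then vanish.\<close>
lemma halfline_energy_zero:
  fixes u du :: "real \<Rightarrow> real"
  assumes p: "p > 2"
    and u: "\<And>x. x \<in> {0..} \<Longrightarrow> (u has_real_derivative du x) (at x within {0..})"
    and du: "\<And>x. x \<in> {0..} \<Longrightarrow> (du has_real_derivative (u x - u x powr (p-1))) (at x within {0..})"
    and pos: "\<And>x. x \<in> {0..} \<Longrightarrow> u x > 0"
    and int: "(\<lambda>x. (u x)\<^sup>2) integrable_on {0..}" "(\<lambda>x. (du x)\<^sup>2) integrable_on {0..}"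
  shows "- (1/2) * (du 0)\<^sup>2 + fpot p (u 0) = 0"
proof -
  define E where "E = - (1/2) * (du 0)\<^sup>2 + fpot p (u 0)"
  have energy: "(du x)\<^sup>2 = (u x)\<^sup>2 - 2 * u x powr p / p - 2 * E" if "x \<ge> 0" for x
    using energy_constant[OF p convex_real_interval(1) _ _ u du pos, of 0 x] that pos[of x]
    by (simp add: E_def fpot_def algebra_simps)
  have u2: "((\<lambda>b. (u b)\<^sup>2) \<longlongrightarrow> 0) at_top"
    by (rule H1_square_tendsto_zero[OF u DERIV_continuous_on[OF du] int])
  have "((\<lambda>b. sqrt ((u b)\<^sup>2)) \<longlongrightarrow> 0) at_top"
    using tendsto_real_sqrt[OF u2] by simp
  moreover have "eventually (\<lambda>b. sqrt ((u b)\<^sup>2) = u b) at_top"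
    using pos by (intro eventually_mono[OF eventually_ge_at_top[of 0]]) (auto simp: less_imp_le)
  ultimately have "(u \<longlongrightarrow> 0) at_top"
    by (rule Lim_transform_eventually)
  moreover have "eventually (\<lambda>b. u b \<ge> 0) at_top"
    using pos by (intro eventually_mono[OF eventually_ge_at_top[of 0]]) (auto simp: less_imp_le)
  ultimately have "((\<lambda>b. u b powr p) \<longlongrightarrow> 0) at_top"
    using p by (intro tendsto_zero_powrI tendsto_const) auto
  then have "((\<lambda>b. (u b)\<^sup>2 - 2 * u b powr p / p - 2 * E) \<longlongrightarrow> 0 - 2 * 0 / p - 2 * E) at_top"
    by (intro tendsto_intros u2) (use p in auto)
  moreover have "eventually (\<lambda>b. (u b)\<^sup>2 - 2 * u b powr p / p - 2 * E = (du b)\<^sup>2) at_top"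
    using energy by (intro eventually_mono[OF eventually_ge_at_top[of 0]]) auto
  ultimately have "((\<lambda>b. (du b)\<^sup>2) \<longlongrightarrow> 0 - 2 * 0 / p - 2 * E) at_top"
    by (rule Lim_transform_eventually)
  then have "((\<lambda>b. (du b)\<^sup>2) \<longlongrightarrow> - 2 * E) at_top" by simp
  then have "- 2 * E = 0" by (rule integrable_nonneg_tendsto_zero[OF int(2), rotated]) simp
  then show ?thesis by (simp add: E_def)
qed

lemma halfline_eq_shifted_phi:
  fixes u du :: "real \<Rightarrow> real"
  assumes p: "p > 2"
    and u: "\<And>x. x \<in> {0..} \<Longrightarrow> (u has_real_derivative du x) (at x within {0..})"
    and du: "\<And>x. x \<in> {0..} \<Longrightarrow> (du has_real_derivative (u x - u x powr (p-1))) (at x within {0..})"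
    and pos: "\<And>x. x \<in> {0..} \<Longrightarrow> u x > 0"
    and int: "(\<lambda>x. (u x)\<^sup>2) integrable_on {0..}" "(\<lambda>x. (du x)\<^sup>2) integrable_on {0..}"
    and u0: "u 0 = phi p y"
  shows "((\<forall>x\<ge>0. u x = phi p (x + y)) \<and> du 0 = dphi p y) \<or>
         ((\<forall>x\<ge>0. u x = phi p (x - y)) \<and> du 0 = - dphi p y)"
proof -
  have "(du 0)\<^sup>2 = (dphi p y)\<^sup>2"
    using halfline_energy_zero[OF p u du pos int] fpot_phi[OF p, of y] u0 by simp
  then consider "du 0 = dphi p y" | "du 0 = - dphi p y"
    using power2_eq_iff by blast
  then show ?thesis
  proof cases
    case 1
    then show ?thesis using eq_shifted_phi_if_initial_values[OF p _ u du pos u0] by blast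
  next
    case 2
    then have "u x = phi p (x + - y)" if "x \<ge> 0" for x
      using eq_shifted_phi_if_initial_values[OF p that u du pos, of "- y"] u0 by (simp add: phi_minus dphi_minus)
    then show ?thesis using 2 by simp
  qed
qed

section \<open>Positive core-symmetric bound states\<close>

lemma sum_two_valued:
  fixes f :: "'a \<Rightarrow> real"
  assumes "finite A"
    and "\<And>i. i \<in> A \<Longrightarrow> (Q i \<and> f i = c) \<or> (R i \<and> f i = - c)"
    and "\<And>i. i \<in> A \<Longrightarrow> \<not> (Q i \<and> R i)"
  shows "sum f A = (real (card {i\<in>A. Q i}) - real (card {i\<in>A. R i})) * c"
proof -
  have R: "{i\<in>A. R i} = A - {i\<in>A. Q i}" using assms(2,3) by blast
  have "sum f A = sum f (A - {i\<in>A. Q i}) + sum f {i\<in>A. Q i}"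
    by (rule sum.subset_diff) (use assms(1) in auto)
  also have "sum f {i\<in>A. Q i} = sum (\<lambda>_. c) {i\<in>A. Q i}"
    using assms(2,3) by (intro sum.cong) auto
  also have "sum f (A - {i\<in>A. Q i}) = sum (\<lambda>_. - c) (A - {i\<in>A. Q i})"
    using assms(2,3) by (intro sum.cong) auto
  finally show ?thesis unfolding R by (simp add: algebra_simps)
qed

locale positive_core_symmetric_bound_state =
  fixes p l :: real and H P L :: nat and uh duh uc duc :: "nat \<Rightarrow> real \<Rightarrow> real"
  assumes p_gt_2: "p > 2" and l_pos: "l > 0" and H_pos: "H \<ge> 1" and core_nonempty: "P + L \<ge> 1"
    and bound_state: "bound_state p l H P L uh duh uc duc"
    and positive_state: "positive_state l H P L uh uc"
    and core_symmetric: "core_symmetric l P L uc"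
begin

lemma halfline_pos: "i < H \<Longrightarrow> x \<in> {0..} \<Longrightarrow> uh i x > 0"
  using positive_state by (simp add: positive_state_def)

lemma edge_pos: "j < P + 2 * L \<Longrightarrow> x \<in> {0..l} \<Longrightarrow> uc j x > 0"
  using positive_state by (simp add: positive_state_def)

lemma halfline_ode:
  assumes "i < H"
  shows "\<And>x. x \<in> {0..} \<Longrightarrow> (uh i has_real_derivative duh i x) (at x within {0..})"
    and "\<And>x. x \<in> {0..} \<Longrightarrow> (duh i has_real_derivative (uh i x - uh i x powr (p-1))) (at x within {0..})"
  using bound_state halfline_pos[OF assms] assms
  by (auto simp: bound_state_def abs_powr_times_self[symmetric])

lemma halfline_H1:
  assumes "i < H"
  shows "(\<lambda>x. (uh i x)\<^sup>2) integrable_on {0..}" and "(\<lambda>x. (duh i x)\<^sup>2) integrable_on {0..}"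
  using bound_state assms by (simp_all add: bound_state_def)

lemma edge_ode:
  assumes "j < P + 2 * L"
  shows "\<And>x. x \<in> {0..l} \<Longrightarrow> (uc j has_real_derivative duc j x) (at x within {0..l})"
    and "\<And>x. x \<in> {0..l} \<Longrightarrow> (duc j has_real_derivative (uc j x - uc j x powr (p-1))) (at x within {0..l})"
  using bound_state edge_pos[OF assms] assms
  by (auto simp: bound_state_def abs_powr_times_self[symmetric])

definition knot_value :: real where
  "knot_value = uh 0 0"

lemma halfline_at_knot:
  assumes "i < H"
  shows "uh i 0 = knot_value"
proof -
  have "\<forall>i<H. \<forall>i'<H. uh i 0 = uh i' 0" using bound_state unfolding bound_state_def by blast
  moreover have "0 < H" using H_pos by simp
  ultimately show ?thesis using assms unfolding knot_value_def by blast
qed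

lemma edge_at_knot:
  assumes "j < P + 2 * L"
  shows "uc j 0 = knot_value"
proof -
  have "\<forall>i<H. \<forall>j<P + 2 * L. uh i 0 = uc j 0" using bound_state unfolding bound_state_def by blast
  moreover have "0 < H" using H_pos by simp
  ultimately show ?thesis using assms unfolding knot_value_def by metis
qed

lemma edges_nonempty: "0 < P + 2 * L"
  using core_nonempty by linarith

lemma edge_deriv_eq:
  assumes "j < P + 2 * L" and "x \<in> {0..l}"
  shows "duc j x = duc 0 x"
proof (rule has_real_derivative_unique_Icc[OF l_pos assms(2)])
  show "\<And>t. t \<in> {0..l} \<Longrightarrow> uc j t = uc 0 t"
    using core_symmetric edges_nonempty assms(1) unfolding core_symmetric_def by blast
qed (use edge_ode(1) assms edges_nonempty in auto)

text \<open>At a loop midpoint the two halves have equal derivatives, so Kirchhoff's condition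
  there is again a Neumann condition.\<close>
lemma edge_slope_at_end: "duc 0 l = 0"
proof (cases "P > 0")
  case True
  then show ?thesis using bound_state by (simp add: bound_state_def)
next
  case False
  then have "L > 0" "P = 0" using core_nonempty by auto
  moreover have "\<forall>k<L. - duc (P + 2 * k) l - duc (P + 2 * k + 1) l = 0"
    using bound_state by (simp add: bound_state_def)
  ultimately have "duc 0 l + duc 1 l = 0" by force
  moreover have "duc 1 l = duc 0 l"
    using edge_deriv_eq[of 1 l] \<open>L > 0\<close> \<open>P = 0\<close> l_pos by simp
  ultimately show ?thesis by simp
qed

lemma kirchhoff_at_knot: "(\<Sum>i<H. duh i 0) + real (P + 2 * L) * duc 0 0 = 0"
proof -
  have "(\<Sum>j<P + 2 * L. duc j 0) = (\<Sum>j<P + 2 * L. duc 0 0)"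
    using edge_deriv_eq l_pos by (intro sum.cong) auto
  then show ?thesis using bound_state by (simp add: bound_state_def)
qed

lemma knot_value_eq_phi:
  obtains y where "y \<ge> 0" and "phi p y = knot_value"
proof -
  have H: "0 < H" using H_pos by simp
  have "- (1/2) * (duh 0 0)\<^sup>2 + fpot p knot_value = 0"
    using halfline_energy_zero[OF p_gt_2 halfline_ode[OF H] halfline_pos[OF H] halfline_H1[OF H]]
    by (simp add: knot_value_def)
  then have "fpot p knot_value \<ge> 0" using zero_le_power2[of "duh 0 0"] by linarith
  moreover have "knot_value > 0" using halfline_pos[OF H, of 0] by (simp add: knot_value_def)
  ultimately show ?thesis
    using phi_surj[OF p_gt_2] le_phi_zero_if_fpot_nonneg[OF p_gt_2] that by blast
qed

lemma halfline_soliton: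
  assumes "phi p y = knot_value" and "i < H"
  shows "((\<forall>x\<ge>0. uh i x = phi p (x + y)) \<and> duh i 0 = dphi p y) \<or>
         ((\<forall>x\<ge>0. uh i x = phi p (x - y)) \<and> duh i 0 = - dphi p y)"
  using halfline_eq_shifted_phi[OF p_gt_2 halfline_ode[OF assms(2)] halfline_pos[OF assms(2)]
      halfline_H1[OF assms(2)]] halfline_at_knot[OF assms(2)] assms(1)
  by simp

lemma knot_shift_pos:
  assumes y: "phi p y = knot_value" and "y \<ge> 0"
  shows "y > 0"
proof (rule ccontr)
  assume "\<not> y > 0"
  then have "y = 0" using assms(2) by simp
  then have "duh i 0 = 0" if "i < H" for i
    using halfline_soliton[OF y that] by auto
  then have slope: "duc 0 0 = 0" using kirchhoff_at_knot edges_nonempty by simp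
  have "uc 0 l = phi p l \<and> duc 0 l = dphi p l"
    using edge_ode[OF edges_nonempty] edge_pos[OF edges_nonempty] edge_at_knot[OF edges_nonempty]
      y \<open>y = 0\<close> slope l_pos
      has_real_derivative_phi[OF p_gt_2] has_real_derivative_dphi[OF p_gt_2] phi_pos[OF p_gt_2]
    by (intro positive_solution_unique[OF p_gt_2, of l]) auto
  then show False using edge_slope_at_end dphi_neg[OF p_gt_2 l_pos] by simp
qed

definition theta :: "real \<Rightarrow> real" where
  "theta y = (real (card {i. i < H \<and> (\<forall>x\<ge>0. uh i x = phi p (x + y))})
    - real (card {i. i < H \<and> (\<forall>x\<ge>0. uh i x = phi p (x - y))})) / real (P + 2 * L)"

lemma slope_at_knot:
  assumes y: "phi p y = knot_value" and "y > 0"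
  shows "sqrt (2 * fpot p knot_value) = - dphi p y"
proof -
  have "2 * fpot p knot_value = (dphi p y)\<^sup>2" using fpot_phi[OF p_gt_2, of y] y by simp
  then show ?thesis using dphi_neg[OF p_gt_2 assms(2)] by simp
qed

lemma edge_slope_at_knot:
  assumes y: "phi p y = knot_value" and "y > 0"
  shows "duc 0 0 = theta y * sqrt (2 * fpot p knot_value)"
proof -
  let ?Hp = "real (card {i. i < H \<and> (\<forall>x\<ge>0. uh i x = phi p (x + y))})"
  let ?Hm = "real (card {i. i < H \<and> (\<forall>x\<ge>0. uh i x = phi p (x - y))})"
  have "\<not> ((\<forall>x\<ge>0. uh i x = phi p (x + y)) \<and> (\<forall>x\<ge>0. uh i x = phi p (x - y)))" for i
  proof
    assume "(\<forall>x\<ge>0. uh i x = phi p (x + y)) \<and> (\<forall>x\<ge>0. uh i x = phi p (x - y))"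
    then have "phi p (y + y) = phi p (y - y)" using assms(2) by (metis less_imp_le)
    then show False using phi_less_phi_zero[OF p_gt_2, of "y + y"] assms(2) by simp
  qed
  then have sum: "(\<Sum>i<H. duh i 0) = (?Hp - ?Hm) * dphi p y"
    using sum_two_valued[of "{..<H}" "\<lambda>i. \<forall>x\<ge>0. uh i x = phi p (x + y)" "\<lambda>i. duh i 0" "dphi p y"
        "\<lambda>i. \<forall>x\<ge>0. uh i x = phi p (x - y)"] halfline_soliton[OF y]
    by simp
  have "real (P + 2 * L) \<noteq> 0" using edges_nonempty by auto
  then have "duc 0 0 = real (P + 2 * L) * duc 0 0 / real (P + 2 * L)"
    by (rule nonzero_mult_div_cancel_left[symmetric])
  also have "real (P + 2 * L) * duc 0 0 = - (\<Sum>i<H. duh i 0)"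
    using kirchhoff_at_knot by linarith
  also have "\<dots> = (?Hp - ?Hm) * sqrt (2 * fpot p knot_value)"
    unfolding sum slope_at_knot[OF assms] by simp
  finally show ?thesis by (simp add: theta_def)
qed

lemma edge_energy:
  assumes y: "phi p y = knot_value" and "y > 0" and j: "j < P + 2 * L" and x: "x \<in> {0..l}"
  shows "- (1/2) * (duc j x)\<^sup>2 + fpot p (uc j x) = (1 - (theta y)\<^sup>2) * fpot p knot_value"
proof -
  have "- (1/2) * (duc j x)\<^sup>2 + fpot p (uc j x) = - (1/2) * (duc j 0)\<^sup>2 + fpot p (uc j 0)"
    using l_pos by (intro energy_constant[OF p_gt_2 convex_real_interval(5) _ x edge_ode[OF j] edge_pos[OF j]]) simp
  also have "\<dots> = - (1/2) * (theta y)\<^sup>2 * (sqrt (2 * fpot p knot_value))\<^sup>2 + fpot p knot_value"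
    using edge_deriv_eq[OF j, of 0] edge_at_knot[OF j] edge_slope_at_knot[OF y assms(2)] l_pos
    by (simp add: power_mult_distrib)
  also have "(sqrt (2 * fpot p knot_value))\<^sup>2 = 2 * fpot p knot_value"
    unfolding slope_at_knot[OF y assms(2)] using fpot_phi[OF p_gt_2, of y] y by simp
  finally show ?thesis by (simp add: algebra_simps)
qed

end

theorem lemma2p1:
  fixes p l :: real and H P L :: nat
    and uh duh uc duc :: "nat \<Rightarrow> real \<Rightarrow> real"
  assumes "p > 2" and "l > 0" and "H \<ge> 1" and "P + L \<ge> 1"
    and "bound_state p l H P L uh duh uc duc"
    and "positive_state l H P L uh uc"
    and "core_symmetric l P L uc"
  shows "\<exists>y>0.
     (\<forall>i<H. (\<forall>x\<ge>0. uh i x = phi p (x + y)) \<or> (\<forall>x\<ge>0. uh i x = phi p (x - y))) \<and>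
     (let Hp = card {i. i < H \<and> (\<forall>x\<ge>0. uh i x = phi p (x + y))};
          Hm = card {i. i < H \<and> (\<forall>x\<ge>0. uh i x = phi p (x - y))};
          \<theta> = (real Hp - real Hm) / real (P + 2 * L);
          z = phi p y
      in z \<in> {0<..<(p / 2) powr (1 / (p - 2))} \<and>
         (\<forall>k<P + 2 * L.
            (\<forall>x\<in>{0..l}. (duc k has_real_derivative (uc k x - uc k x powr (p - 1))) (at x within {0..l})) \<and>
            uc k 0 = z \<and>
            duc k 0 = \<theta> * sqrt (2 * fpot p z) \<and>
            duc k l = 0 \<and>
            (\<forall>x\<in>{0..l}. - (1 / 2) * (duc k x)\<^sup>2 + fpot p (uc k x) = (1 - \<theta>\<^sup>2) * fpot p z)))"
proof -
  interpret positive_core_symmetric_bound_state p l H P L uh duh uc duc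
    using assms by unfold_locales
  obtain y where "y \<ge> 0" and y: "phi p y = knot_value" by (rule knot_value_eq_phi)
  then have "y > 0" using knot_shift_pos by blast
  show ?thesis
  proof (rule exI[of _ y], unfold Let_def theta_def[symmetric] y, intro conjI allI impI ballI)
    show "y > 0" by fact
  next
    fix i assume "i < H"
    then show "(\<forall>x\<ge>0. uh i x = phi p (x + y)) \<or> (\<forall>x\<ge>0. uh i x = phi p (x - y))"
      using halfline_soliton[OF y] by blast
  next
    show "knot_value \<in> {0<..<(p / 2) powr (1 / (p - 2))}"
      using phi_pos[OF p_gt_2, of y] phi_less_phi_zero[OF p_gt_2, of y] \<open>y > 0\<close> y
      by (simp add: phi_zero)
  next
    fix k assume k: "k < P + 2 * L"
    show "uc k 0 = knot_value" by (rule edge_at_knot[OF k])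
    show "duc k 0 = theta y * sqrt (2 * fpot p knot_value)"
      using edge_deriv_eq[OF k, of 0] l_pos edge_slope_at_knot[OF y \<open>y > 0\<close>] by simp
    show "duc k l = 0" using edge_deriv_eq[OF k, of l] l_pos edge_slope_at_end by simp
    fix x assume x: "x \<in> {0..l}"
    show "(duc k has_real_derivative (uc k x - uc k x powr (p - 1))) (at x within {0..l})"
      by (rule edge_ode(2)[OF k x])
    show "- (1 / 2) * (duc k x)\<^sup>2 + fpot p (uc k x) = (1 - (theta y)\<^sup>2) * fpot p knot_value"
      by (rule edge_energy[OF y \<open>y > 0\<close> k x])
  qed
qed

end
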